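(* Let $\Omega\subset\mathbb{R}^3$ be a bounded domain and $N>0$. For all $u,v\in L^4(\Omega)^3$, $$\|F_N(u)\,u\otimes u-F_N(v)\,v\otimes v\|_{L^2}\leqslant 3N\|u-v\|_{L^4}\quad\text{and}\quad\|F_N(u)\,u\otimes u\|_{L^2}\leqslant N\|u\|_{L^4}.$$
   Context: $f_N(r)=\min\{1,N/r\}$ for $r\geqslant0$ (with $f_N(0)=1$), and $F_N(u)=f_N(\|u\|_{L^4(\Omega)^3})$. For $u,v:\Omega\to\mathbb{R}^3$, $u\otimes v$ is the matrix-valued function $(u_iv_j)_{i,j=1}^3$; $L^2$-norms of matrix-valued functions use the Frobenius (Euclidean) norm pointwise. $L^r$ denotes $L^r(\Omega)^3$ (or its matrix analogue). *)

theory Defs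
  imports "HOL-Analysis.Analysis"
begin

definition fN :: "real \<Rightarrow> real \<Rightarrow> real" where
  "fN N r = (if r = 0 then 1 else min 1 (N / r))"

text \<open>L^p norm on Omega w.r.t. Lebesgue measure, pointwise Euclidean norm
  (for matrix-valued functions real^3^3 this is the Frobenius norm).\<close>
definition Lp_norm :: "real \<Rightarrow> ('a::euclidean_space) set \<Rightarrow> ('a \<Rightarrow> 'b::real_normed_vector) \<Rightarrow> real" where
  "Lp_norm p \<Omega> u = (\<integral>x. norm (u x) powr p \<partial>(lebesgue_on \<Omega>)) powr (1 / p)"

definition in_Lp :: "real \<Rightarrow> ('a::euclidean_space) set \<Rightarrow> ('a \<Rightarrow> 'b::{real_normed_vector, second_countable_topology}) \<Rightarrow> bool" where
  "in_Lp p \<Omega> u \<longleftrightarrow> u \<in> borel_measurable (lebesgue_on \<Omega>) \<and>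
      integrable (lebesgue_on \<Omega>) (\<lambda>x. norm (u x) powr p)"

definition FN :: "real \<Rightarrow> (real^3) set \<Rightarrow> (real^3 \<Rightarrow> real^3) \<Rightarrow> real" where
  "FN N \<Omega> u = fN N (Lp_norm 4 \<Omega> u)"

definition tens :: "real^3 \<Rightarrow> real^3 \<Rightarrow> real^3^3" where
  "tens a b = (\<chi> i j. a $ i * b $ j)"

end

theory Submission
  imports Defs
begin

text \<open>Write \<open>\<alpha> = F\<^sub>N(u)\<close>, \<open>\<beta> = F\<^sub>N(v)\<close>, \<open>a = \<parallel>u\<parallel>\<^sub>4\<close>, \<open>b = \<parallel>v\<parallel>\<^sub>4\<close> and
  \<open>d = \<parallel>u - v\<parallel>\<^sub>4\<close>. The pointwise identity
  \<open>\<alpha> u\<otimes>u - \<beta> v\<otimes>v = (\<alpha> u - \<beta> v)\<otimes>u + \<beta> v\<otimes>(u - v)\<close>, together with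
  \<open>|x\<otimes>y| = |x| |y|\<close> and H\<ouml>lder's inequality \<open>\<parallel>f g\<parallel>\<^sub>2 \<le> \<parallel>f\<parallel>\<^sub>4 \<parallel>g\<parallel>\<^sub>4\<close>, bounds the
  \<open>L\<^sup>2\<close> norm of the difference by \<open>\<parallel>\<alpha> u - \<beta> v\<parallel>\<^sub>4 a + \<beta> b d\<close>, and Minkowski's
  inequality gives \<open>\<parallel>\<alpha> u - \<beta> v\<parallel>\<^sub>4 \<le> \<alpha> d + |\<alpha> - \<beta>| b\<close>. Everything is then controlled
  by two scalar properties of the truncation: \<open>r f\<^sub>N(r) \<le> N\<close> and
  \<open>a b |f\<^sub>N(a) - f\<^sub>N(b)| \<le> N |a - b|\<close>, where \<open>|a - b| \<le> d\<close>. The second inequality is simply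
  \<open>\<parallel>\<alpha> u\<otimes>u\<parallel>\<^sub>2 \<le> \<alpha> a\<^sup>2 \<le> N a\<close>.\<close>

section \<open>Square-integrable functions\<close>

definition square_integrable :: "'a measure \<Rightarrow> ('a \<Rightarrow> real) \<Rightarrow> bool" where
  "square_integrable M f \<longleftrightarrow> f \<in> borel_measurable M \<and> integrable M (\<lambda>x. (f x)\<^sup>2)"

definition L2_norm :: "'a measure \<Rightarrow> ('a \<Rightarrow> real) \<Rightarrow> real" where
  "L2_norm M f = sqrt (\<integral>x. (f x)\<^sup>2 \<partial>M)"

lemma L2_norm_nonneg: "0 \<le> L2_norm M f"
  by (simp add: L2_norm_def)

lemma L2_norm_squared: "(L2_norm M f)\<^sup>2 = (\<integral>x. (f x)\<^sup>2 \<partial>M)"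
  by (simp add: L2_norm_def)

lemma square_integrable_imp_integrable_mult:
  assumes "square_integrable M f" "square_integrable M g"
  shows "integrable M (\<lambda>x. f x * g x)"
proof (rule Bochner_Integration.integrable_bound)
  show "integrable M (\<lambda>x. (f x)\<^sup>2 + (g x)\<^sup>2)"
    using assms by (simp add: square_integrable_def)
  show "(\<lambda>x. f x * g x) \<in> borel_measurable M"
    using assms by (simp add: square_integrable_def borel_measurable_times)
  show "AE x in M. norm (f x * g x) \<le> norm ((f x)\<^sup>2 + (g x)\<^sup>2)"
  proof (rule AE_I2)
    fix x
    have "2 * \<bar>f x\<bar> * \<bar>g x\<bar> \<le> \<bar>f x\<bar>\<^sup>2 + \<bar>g x\<bar>\<^sup>2"
      by (rule sum_squares_bound)
    moreover have "0 \<le> \<bar>f x\<bar> * \<bar>g x\<bar>" by simp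
    ultimately have "\<bar>f x\<bar> * \<bar>g x\<bar> \<le> (f x)\<^sup>2 + (g x)\<^sup>2"
      unfolding power2_abs by linarith
    then show "norm (f x * g x) \<le> norm ((f x)\<^sup>2 + (g x)\<^sup>2)"
      by (simp add: abs_mult)
  qed
qed

lemma square_integrable_add:
  assumes "square_integrable M f" "square_integrable M g"
  shows "square_integrable M (\<lambda>x. f x + g x)"
proof -
  have "(\<lambda>x. (f x + g x)\<^sup>2) = (\<lambda>x. (f x)\<^sup>2 + 2 * (f x * g x) + (g x)\<^sup>2)"
    by (simp add: fun_eq_iff power2_sum)
  then show ?thesis
    using assms square_integrable_imp_integrable_mult[OF assms]
    by (simp add: square_integrable_def borel_measurable_add)
qed

lemma square_integrable_cmult:
  "square_integrable M f \<Longrightarrow> square_integrable M (\<lambda>x. c * f x)"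
  by (simp add: square_integrable_def power_mult_distrib borel_measurable_times)

lemma L2_norm_cmult: "L2_norm M (\<lambda>x. c * f x) = \<bar>c\<bar> * L2_norm M f"
  by (simp add: L2_norm_def power_mult_distrib real_sqrt_mult)

lemma L2_norm_mono:
  assumes "\<And>x. \<bar>h x\<bar> \<le> g x" "integrable M (\<lambda>x. (g x)\<^sup>2)"
  shows "L2_norm M h \<le> L2_norm M g"
proof -
  have "(\<integral>x. (h x)\<^sup>2 \<partial>M) \<le> (\<integral>x. (g x)\<^sup>2 \<partial>M)"
  proof (cases "integrable M (\<lambda>x. (h x)\<^sup>2)")
    case True
    show ?thesis
    proof (rule integral_mono[OF True assms(2)])
      fix x
      have "\<bar>h x\<bar> \<le> \<bar>g x\<bar>"
        using assms(1)[of x] by linarith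
      then show "(h x)\<^sup>2 \<le> (g x)\<^sup>2"
        by (simp add: abs_le_square_iff)
    qed
  next
    case False
    then show ?thesis by (simp add: not_integrable_integral_eq)
  qed
  then show ?thesis
    unfolding L2_norm_def by (rule real_sqrt_le_mono)
qed

lemma le_sqrt_mult_if_quadratic_nonneg:
  fixes A B C :: real
  assumes "0 \<le> B" and quadratic_nonneg: "\<And>t. 0 \<le> A - 2 * t * C + t\<^sup>2 * B"
  shows "C \<le> sqrt A * sqrt B"
proof (cases "C \<le> 0")
  case True
  have "0 \<le> A" using quadratic_nonneg[of 0] by simp
  then show ?thesis using True \<open>0 \<le> B\<close> by (meson order.trans mult_nonneg_nonneg real_sqrt_ge_zero)
next
  case False
  have "B \<noteq> 0"
  proof
    assume "B = 0"
    then show False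
      using quadratic_nonneg[of "(A + 1) / (2 * C)"] False by (simp add: field_simps)
  qed
  then have "C\<^sup>2 \<le> A * B"
    using quadratic_nonneg[of "C / B"] \<open>0 \<le> B\<close> by (simp add: field_simps power2_eq_square)
  then have "sqrt (C\<^sup>2) \<le> sqrt (A * B)" by (rule real_sqrt_le_mono)
  then show ?thesis using False by (simp add: real_sqrt_mult)
qed

text \<open>Cauchy--Schwarz inequality: the discriminant of the nonnegative quadratic
  \<open>t \<mapsto> \<integral>(f - t g)\<^sup>2\<close> is nonpositive.\<close>
lemma integral_mult_le_L2_norm:
  assumes "square_integrable M f" "square_integrable M g"
  shows "(\<integral>x. f x * g x \<partial>M) \<le> L2_norm M f * L2_norm M g"
  unfolding L2_norm_def
proof (rule le_sqrt_mult_if_quadratic_nonneg)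
  show "0 \<le> (\<integral>x. (g x)\<^sup>2 \<partial>M)" by simp
  fix t
  have "0 \<le> (\<integral>x. (f x - t * g x)\<^sup>2 \<partial>M)" by simp
  also have "\<dots> = (\<integral>x. (f x)\<^sup>2 - 2 * t * (f x * g x) + t\<^sup>2 * (g x)\<^sup>2 \<partial>M)"
    by (simp add: power2_diff power_mult_distrib algebra_simps)
  also have "\<dots> = (\<integral>x. (f x)\<^sup>2 \<partial>M) - 2 * t * (\<integral>x. f x * g x \<partial>M) + t\<^sup>2 * (\<integral>x. (g x)\<^sup>2 \<partial>M)"
    using assms square_integrable_imp_integrable_mult[OF assms]
    by (simp add: square_integrable_def)
  finally show "0 \<le> (\<integral>x. (f x)\<^sup>2 \<partial>M) - 2 * t * (\<integral>x. f x * g x \<partial>M) + t\<^sup>2 * (\<integral>x. (g x)\<^sup>2 \<partial>M)" .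
qed

lemma L2_norm_add:
  assumes "square_integrable M f" "square_integrable M g"
  shows "L2_norm M (\<lambda>x. f x + g x) \<le> L2_norm M f + L2_norm M g"
proof (rule power2_le_imp_le)
  have "(\<lambda>x. (f x + g x)\<^sup>2) = (\<lambda>x. (f x)\<^sup>2 + 2 * (f x * g x) + (g x)\<^sup>2)"
    by (simp add: fun_eq_iff power2_sum)
  then have "(L2_norm M (\<lambda>x. f x + g x))\<^sup>2
      = (\<integral>x. (f x)\<^sup>2 \<partial>M) + 2 * (\<integral>x. f x * g x \<partial>M) + (\<integral>x. (g x)\<^sup>2 \<partial>M)"
    using assms square_integrable_imp_integrable_mult[OF assms]
    by (simp add: L2_norm_squared square_integrable_def)
  also have "\<dots> \<le> (L2_norm M f)\<^sup>2 + 2 * (L2_norm M f * L2_norm M g) + (L2_norm M g)\<^sup>2"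
    using integral_mult_le_L2_norm[OF assms] by (simp add: L2_norm_squared)
  also have "\<dots> = (L2_norm M f + L2_norm M g)\<^sup>2"
    by (simp add: power2_sum)
  finally show "(L2_norm M (\<lambda>x. f x + g x))\<^sup>2 \<le> (L2_norm M f + L2_norm M g)\<^sup>2" .
qed (simp add: L2_norm_nonneg add_nonneg_nonneg)

section \<open>Fourth-power integrable functions\<close>

definition fourth_power_integrable :: "'a measure \<Rightarrow> ('a \<Rightarrow> real) \<Rightarrow> bool" where
  "fourth_power_integrable M f \<longleftrightarrow> f \<in> borel_measurable M \<and> integrable M (\<lambda>x. f x ^ 4)"

definition L4_norm :: "'a measure \<Rightarrow> ('a \<Rightarrow> real) \<Rightarrow> real" where
  "L4_norm M f = (\<integral>x. f x ^ 4 \<partial>M) powr (1/4)"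

lemma square_square_eq_power4: "((a :: real)\<^sup>2)\<^sup>2 = a ^ 4"
  by (simp flip: power_mult)

lemma fourth_power_integrable_iff:
  "fourth_power_integrable M f \<longleftrightarrow> f \<in> borel_measurable M \<and> square_integrable M (\<lambda>x. (f x)\<^sup>2)"
  by (auto simp: fourth_power_integrable_def square_integrable_def square_square_eq_power4)

lemma L4_norm_eq_sqrt_L2_norm: "L4_norm M f = sqrt (L2_norm M (\<lambda>x. (f x)\<^sup>2))"
proof -
  have "0 \<le> (\<integral>x. f x ^ 4 \<partial>M)"
    by (intro Bochner_Integration.integral_nonneg) (simp add: zero_le_even_power')
  then show ?thesis
    by (simp add: L4_norm_def L2_norm_def square_square_eq_power4 powr_powr flip: powr_half_sqrt)
qed

lemma L4_norm_nonneg: "0 \<le> L4_norm M f"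
  by (simp add: L4_norm_def)

lemma fourth_power_integrable_cmult:
  "fourth_power_integrable M f \<Longrightarrow> fourth_power_integrable M (\<lambda>x. c * f x)"
  by (simp add: fourth_power_integrable_def power_mult_distrib borel_measurable_times)

lemma L4_norm_cmult: "L4_norm M (\<lambda>x. c * f x) = \<bar>c\<bar> * L4_norm M f"
  by (simp add: L4_norm_eq_sqrt_L2_norm power_mult_distrib L2_norm_cmult real_sqrt_mult)

lemma fourth_power_integrable_imp_square_integrable_mult:
  assumes "fourth_power_integrable M f" "fourth_power_integrable M g"
  shows "square_integrable M (\<lambda>x. f x * g x)"
  using assms square_integrable_imp_integrable_mult[of M "\<lambda>x. (f x)\<^sup>2" "\<lambda>x. (g x)\<^sup>2"]
  by (simp add: fourth_power_integrable_iff square_integrable_def power_mult_distrib borel_measurable_times)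

lemma L2_norm_mult_le_L4_norm:
  assumes "fourth_power_integrable M f" "fourth_power_integrable M g"
  shows "L2_norm M (\<lambda>x. f x * g x) \<le> L4_norm M f * L4_norm M g"
proof -
  have "L2_norm M (\<lambda>x. f x * g x) = sqrt (\<integral>x. (f x)\<^sup>2 * (g x)\<^sup>2 \<partial>M)"
    by (simp add: L2_norm_def power_mult_distrib)
  also have "\<dots> \<le> sqrt (L2_norm M (\<lambda>x. (f x)\<^sup>2) * L2_norm M (\<lambda>x. (g x)\<^sup>2))"
    using assms by (intro real_sqrt_le_mono integral_mult_le_L2_norm) (simp_all add: fourth_power_integrable_iff)
  also have "\<dots> = L4_norm M f * L4_norm M g"
    by (simp add: L4_norm_eq_sqrt_L2_norm real_sqrt_mult)
  finally show ?thesis .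
qed

lemma fourth_power_integrable_add:
  assumes "fourth_power_integrable M f" "fourth_power_integrable M g"
  shows "fourth_power_integrable M (\<lambda>x. f x + g x)"
proof -
  have expand: "(f x + g x)\<^sup>2 = (f x)\<^sup>2 + (2 * (f x * g x) + (g x)\<^sup>2)" for x
    by (simp add: power2_eq_square algebra_simps)
  have "square_integrable M (\<lambda>x. (f x)\<^sup>2 + (2 * (f x * g x) + (g x)\<^sup>2))"
    using assms
    by (intro square_integrable_add square_integrable_cmult fourth_power_integrable_imp_square_integrable_mult)
       (simp_all add: fourth_power_integrable_iff)
  then show ?thesis
    using assms unfolding fourth_power_integrable_iff expand by (simp add: borel_measurable_add)
qed

lemma fourth_power_integrable_dominated:
  assumes "h \<in> borel_measurable M" "fourth_power_integrable M g" "\<And>x. \<bar>h x\<bar> \<le> g x"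
  shows "fourth_power_integrable M h"
proof -
  have "integrable M (\<lambda>x. h x ^ 4)"
  proof (rule Bochner_Integration.integrable_bound)
    show "integrable M (\<lambda>x. g x ^ 4)"
      using assms(2) by (simp add: fourth_power_integrable_def)
    show "(\<lambda>x. h x ^ 4) \<in> borel_measurable M"
      using assms(1) by (rule borel_measurable_power)
    show "AE x in M. norm (h x ^ 4) \<le> norm (g x ^ 4)"
    proof (rule AE_I2)
      fix x
      have "\<bar>h x\<bar> \<le> \<bar>g x\<bar>"
        using assms(3)[of x] by linarith
      then have "\<bar>h x\<bar> ^ 4 \<le> \<bar>g x\<bar> ^ 4"
        by (rule power_mono) simp
      then show "norm (h x ^ 4) \<le> norm (g x ^ 4)"
        by (simp add: power_abs)
    qed
  qed
  then show ?thesis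
    using assms(1) by (simp add: fourth_power_integrable_def)
qed

lemma L4_norm_mono:
  assumes "\<And>x. \<bar>h x\<bar> \<le> g x" "integrable M (\<lambda>x. g x ^ 4)"
  shows "L4_norm M h \<le> L4_norm M g"
  unfolding L4_norm_eq_sqrt_L2_norm
proof (intro real_sqrt_le_mono L2_norm_mono)
  show "\<bar>(h x)\<^sup>2\<bar> \<le> (g x)\<^sup>2" for x
  proof -
    have "\<bar>h x\<bar> \<le> \<bar>g x\<bar>"
      using assms(1)[of x] by linarith
    then show ?thesis by (simp add: abs_le_square_iff)
  qed
  show "integrable M (\<lambda>x. ((g x)\<^sup>2)\<^sup>2)"
    using assms(2) by (simp add: square_square_eq_power4)
qed

text \<open>Minkowski's inequality in \<open>L\<^sup>4\<close> from the one in \<open>L\<^sup>2\<close>, applied to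
  \<open>(f + g)\<^sup>2 = f\<^sup>2 + 2 f g + g\<^sup>2\<close>, and H\<ouml>lder's inequality for \<open>f g\<close>.\<close>
lemma L4_norm_add:
  assumes "fourth_power_integrable M f" "fourth_power_integrable M g"
  shows "L4_norm M (\<lambda>x. f x + g x) \<le> L4_norm M f + L4_norm M g"
proof (rule power2_le_imp_le)
  have sq: "square_integrable M (\<lambda>x. (f x)\<^sup>2)" "square_integrable M (\<lambda>x. (g x)\<^sup>2)"
    and fg: "square_integrable M (\<lambda>x. 2 * (f x * g x))"
    using assms by (simp_all add: fourth_power_integrable_iff square_integrable_cmult fourth_power_integrable_imp_square_integrable_mult)
  have expand: "(f x + g x)\<^sup>2 = (f x)\<^sup>2 + (2 * (f x * g x) + (g x)\<^sup>2)" for x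
    by (simp add: power2_eq_square algebra_simps)
  have "(L4_norm M (\<lambda>x. f x + g x))\<^sup>2 = L2_norm M (\<lambda>x. (f x)\<^sup>2 + (2 * (f x * g x) + (g x)\<^sup>2))"
    unfolding L4_norm_eq_sqrt_L2_norm expand by (simp add: L2_norm_nonneg)
  also have "\<dots> \<le> L2_norm M (\<lambda>x. (f x)\<^sup>2) + (2 * L2_norm M (\<lambda>x. f x * g x) + L2_norm M (\<lambda>x. (g x)\<^sup>2))"
    using L2_norm_add[OF sq(1) square_integrable_add[OF fg sq(2)]] L2_norm_add[OF fg sq(2)]
    by (simp add: L2_norm_cmult)
  also have "\<dots> \<le> (L4_norm M f)\<^sup>2 + (2 * (L4_norm M f * L4_norm M g) + (L4_norm M g)\<^sup>2)"
    using L2_norm_mult_le_L4_norm[OF assms]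
    by (simp add: L4_norm_eq_sqrt_L2_norm L2_norm_nonneg)
  also have "\<dots> = (L4_norm M f + L4_norm M g)\<^sup>2"
    by (simp add: power2_sum)
  finally show "(L4_norm M (\<lambda>x. f x + g x))\<^sup>2 \<le> (L4_norm M f + L4_norm M g)\<^sup>2" .
qed (simp add: L4_norm_nonneg add_nonneg_nonneg)

lemma L4_norm_triangle:
  assumes "fourth_power_integrable M f" "fourth_power_integrable M g" "\<And>x. \<bar>h x\<bar> \<le> f x + g x"
  shows "L4_norm M h \<le> L4_norm M f + L4_norm M g"
proof -
  have "L4_norm M h \<le> L4_norm M (\<lambda>x. f x + g x)"
    using assms fourth_power_integrable_add[OF assms(1,2)]
    by (intro L4_norm_mono) (simp_all add: fourth_power_integrable_def)
  also have "\<dots> \<le> L4_norm M f + L4_norm M g"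
    by (rule L4_norm_add[OF assms(1,2)])
  finally show ?thesis .
qed

section \<open>The truncation factor\<close>

lemma fN_eq: "0 \<le> r \<Longrightarrow> 0 < N \<Longrightarrow> fN N r = (if r \<le> N then 1 else N / r)"
  unfolding fN_def by (auto simp: min_def field_simps)

lemma fN_nonneg: "0 \<le> r \<Longrightarrow> 0 < N \<Longrightarrow> 0 \<le> fN N r"
  by (simp add: fN_eq)

lemma mult_fN_le: "0 \<le> r \<Longrightarrow> 0 < N \<Longrightarrow> r * fN N r \<le> N"
  by (simp add: fN_eq)

lemma fN_diff_le:
  assumes "0 < N" "0 \<le> a" "0 \<le> b"
  shows "a * b * \<bar>fN N a - fN N b\<bar> \<le> N * \<bar>a - b\<bar>"
proof -
  have ordered: "a * b * \<bar>fN N a - fN N b\<bar> \<le> N * (b - a)" if "0 \<le> a" "a \<le> b" for a b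
  proof -
    consider "b \<le> N" | "a \<le> N" "N < b" | "N < a"
      by linarith
    then show ?thesis
    proof cases
      case 1
      then show ?thesis using assms(1) that by (simp add: fN_eq)
    next
      case 2
      then have "a * b * \<bar>fN N a - fN N b\<bar> = a * (b - N)"
        using assms(1) that by (simp add: fN_eq field_simps)
      also have "\<dots> \<le> N * (b - a)"
        using 2 that by (simp add: mult_right_mono algebra_simps)
      finally show ?thesis .
    next
      case 3
      then show ?thesis
        using assms(1) that by (simp add: fN_eq field_simps)
    qed
  qed
  show ?thesis
    using ordered[of a b] ordered[of b a] assms
    by (cases "a \<le> b") (simp_all add: abs_minus_commute mult.commute)
qed

lemma fN_tensor_estimate:
  assumes "0 < N" "0 \<le> a" "0 \<le> b" "\<bar>a - b\<bar> \<le> d"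
  shows "(fN N a * d + \<bar>fN N a - fN N b\<bar> * b) * a + fN N b * (b * d) \<le> 3 * N * d"
proof -
  have "0 \<le> d" using assms(4) by linarith
  have "a * fN N a * d \<le> N * d" "b * fN N b * d \<le> N * d"
    using assms(1-3) \<open>0 \<le> d\<close> by (simp_all add: mult_right_mono mult_fN_le)
  moreover have "a * b * \<bar>fN N a - fN N b\<bar> \<le> N * d"
    using fN_diff_le[OF assms(1-3)] mult_left_mono[OF assms(4), of N] assms(1) by linarith
  ultimately show ?thesis
    by (simp add: algebra_simps)
qed

section \<open>Estimates for the truncated tensor product\<close>

lemma norm_scaleR_diff_le:
  fixes x y :: "'a::real_normed_vector"
  assumes "0 \<le> \<alpha>"
  shows "norm (\<alpha> *\<^sub>R x - \<beta> *\<^sub>R y) \<le> \<alpha> * norm (x - y) + \<bar>\<alpha> - \<beta>\<bar> * norm y"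
proof -
  have "\<alpha> *\<^sub>R x - \<beta> *\<^sub>R y = \<alpha> *\<^sub>R (x - y) + (\<alpha> - \<beta>) *\<^sub>R y"
    by (simp add: algebra_simps)
  then show ?thesis
    using assms norm_triangle_ineq[of "\<alpha> *\<^sub>R (x - y)" "(\<alpha> - \<beta>) *\<^sub>R y"] by simp
qed

lemma norm_tens: "norm (tens a b) = norm a * norm b"
proof -
  have rows: "tens a b $ i = (a $ i) *\<^sub>R b" for i
    by (simp add: tens_def vec_eq_iff)
  have "norm (tens a b) = L2_set (\<lambda>i. norm (tens a b $ i)) UNIV"
    by (rule norm_vec_def)
  also have "\<dots> = L2_set (\<lambda>i. \<bar>a $ i\<bar> * norm b) UNIV"
    by (simp only: rows norm_scaleR)
  also have "\<dots> = L2_set (\<lambda>i. \<bar>a $ i\<bar>) UNIV * norm b"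
    by (simp add: L2_set_left_distrib)
  also have "\<dots> = norm a * norm b"
    by (simp add: norm_vec_def)
  finally show ?thesis .
qed

lemma norm_tens_scaleR_diff_le:
  assumes "0 \<le> \<beta>"
  shows "norm (\<alpha> *\<^sub>R tens x x - \<beta> *\<^sub>R tens y y)
    \<le> norm (\<alpha> *\<^sub>R x - \<beta> *\<^sub>R y) * norm x + \<beta> * (norm y * norm (x - y))"
proof -
  have "\<alpha> *\<^sub>R tens x x - \<beta> *\<^sub>R tens y y = tens (\<alpha> *\<^sub>R x - \<beta> *\<^sub>R y) x + \<beta> *\<^sub>R tens y (x - y)"
    unfolding tens_def by (simp add: vec_eq_iff algebra_simps)
  then show ?thesis
    using assms norm_triangle_ineq[of "tens (\<alpha> *\<^sub>R x - \<beta> *\<^sub>R y) x" "\<beta> *\<^sub>R tens y (x - y)"]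
    by (simp add: norm_tens)
qed

lemma Lp_norm_4_eq_L4_norm: "Lp_norm 4 \<Omega> u = L4_norm (lebesgue_on \<Omega>) (\<lambda>x. norm (u x))"
  by (simp add: Lp_norm_def L4_norm_def)

lemma Lp_norm_2_eq_L2_norm: "Lp_norm 2 \<Omega> u = L2_norm (lebesgue_on \<Omega>) (\<lambda>x. norm (u x))"
  by (simp add: Lp_norm_def L2_norm_def powr_half_sqrt)

lemma in_Lp_4_imp_fourth_power_integrable:
  assumes "in_Lp 4 \<Omega> u"
  shows "fourth_power_integrable (lebesgue_on \<Omega>) (\<lambda>x. norm (u x))"
proof -
  have [measurable]: "u \<in> borel_measurable (lebesgue_on \<Omega>)"
    using assms by (simp add: in_Lp_def)
  show ?thesis
    using assms by (simp add: in_Lp_def fourth_power_integrable_def)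
qed

lemma fourth_power_integrable_norm_scaleR_diff:
  fixes u v :: "'a \<Rightarrow> 'b::{real_normed_vector, second_countable_topology}"
  assumes [measurable]: "u \<in> borel_measurable M" "v \<in> borel_measurable M"
    and "fourth_power_integrable M (\<lambda>x. norm (u x))" "fourth_power_integrable M (\<lambda>x. norm (v x))"
  shows "fourth_power_integrable M (\<lambda>x. norm (\<alpha> *\<^sub>R u x - \<beta> *\<^sub>R v x))"
proof (rule fourth_power_integrable_dominated)
  show "(\<lambda>x. norm (\<alpha> *\<^sub>R u x - \<beta> *\<^sub>R v x)) \<in> borel_measurable M"
    by measurable
  show "fourth_power_integrable M (\<lambda>x. \<bar>\<alpha>\<bar> * norm (u x) + \<bar>\<beta>\<bar> * norm (v x))"
    using assms(3,4) by (intro fourth_power_integrable_add fourth_power_integrable_cmult)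
  show "\<bar>norm (\<alpha> *\<^sub>R u x - \<beta> *\<^sub>R v x)\<bar> \<le> \<bar>\<alpha>\<bar> * norm (u x) + \<bar>\<beta>\<bar> * norm (v x)" for x
    using norm_triangle_ineq4[of "\<alpha> *\<^sub>R u x" "\<beta> *\<^sub>R v x"] by simp
qed

lemma L4_norm_scaleR_diff_le:
  fixes u v :: "'a \<Rightarrow> 'b::{real_normed_vector, second_countable_topology}"
  assumes "u \<in> borel_measurable M" "v \<in> borel_measurable M"
    and U: "fourth_power_integrable M (\<lambda>x. norm (u x))" and V: "fourth_power_integrable M (\<lambda>x. norm (v x))"
    and "0 \<le> \<alpha>"
  shows "L4_norm M (\<lambda>x. norm (\<alpha> *\<^sub>R u x - \<beta> *\<^sub>R v x))
    \<le> \<alpha> * L4_norm M (\<lambda>x. norm (u x - v x)) + \<bar>\<alpha> - \<beta>\<bar> * L4_norm M (\<lambda>x. norm (v x))"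
proof -
  have D: "fourth_power_integrable M (\<lambda>x. norm (u x - v x))"
    using fourth_power_integrable_norm_scaleR_diff[OF assms(1-4), of 1 1] by simp
  have "L4_norm M (\<lambda>x. norm (\<alpha> *\<^sub>R u x - \<beta> *\<^sub>R v x))
      \<le> L4_norm M (\<lambda>x. \<alpha> * norm (u x - v x)) + L4_norm M (\<lambda>x. \<bar>\<alpha> - \<beta>\<bar> * norm (v x))"
    by (rule L4_norm_triangle[OF fourth_power_integrable_cmult[OF D] fourth_power_integrable_cmult[OF V]])
      (simp add: norm_scaleR_diff_le[OF \<open>0 \<le> \<alpha>\<close>])
  then show ?thesis
    using \<open>0 \<le> \<alpha>\<close> by (simp add: L4_norm_cmult)
qed

lemma abs_L4_norm_diff_le:
  fixes u v :: "'a \<Rightarrow> 'b::{real_normed_vector, second_countable_topology}"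
  assumes "u \<in> borel_measurable M" "v \<in> borel_measurable M"
    and U: "fourth_power_integrable M (\<lambda>x. norm (u x))" and V: "fourth_power_integrable M (\<lambda>x. norm (v x))"
  shows "\<bar>L4_norm M (\<lambda>x. norm (u x)) - L4_norm M (\<lambda>x. norm (v x))\<bar> \<le> L4_norm M (\<lambda>x. norm (u x - v x))"
proof -
  have D: "fourth_power_integrable M (\<lambda>x. norm (u x - v x))"
    using fourth_power_integrable_norm_scaleR_diff[OF assms, of 1 1] by simp
  have "norm (u x) \<le> norm (u x - v x) + norm (v x)" "norm (v x) \<le> norm (u x - v x) + norm (u x)" for x
    using norm_triangle_sub[of "u x" "v x"] norm_triangle_sub[of "v x" "u x"]
    by (simp_all add: norm_minus_commute)
  then have "L4_norm M (\<lambda>x. norm (u x)) \<le> L4_norm M (\<lambda>x. norm (u x - v x)) + L4_norm M (\<lambda>x. norm (v x))"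
    "L4_norm M (\<lambda>x. norm (v x)) \<le> L4_norm M (\<lambda>x. norm (u x - v x)) + L4_norm M (\<lambda>x. norm (u x))"
    by (simp_all add: L4_norm_triangle[OF D V] L4_norm_triangle[OF D U])
  then show ?thesis by linarith
qed

lemma L2_norm_tens_scaleR_diff_le:
  fixes u v :: "'a \<Rightarrow> real^3"
  assumes "u \<in> borel_measurable M" "v \<in> borel_measurable M"
    and U: "fourth_power_integrable M (\<lambda>x. norm (u x))" and V: "fourth_power_integrable M (\<lambda>x. norm (v x))"
    and "0 \<le> \<beta>"
  shows "L2_norm M (\<lambda>x. norm (\<alpha> *\<^sub>R tens (u x) (u x) - \<beta> *\<^sub>R tens (v x) (v x)))
    \<le> L4_norm M (\<lambda>x. norm (\<alpha> *\<^sub>R u x - \<beta> *\<^sub>R v x)) * L4_norm M (\<lambda>x. norm (u x))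
      + \<beta> * (L4_norm M (\<lambda>x. norm (v x)) * L4_norm M (\<lambda>x. norm (u x - v x)))"
proof -
  have W: "fourth_power_integrable M (\<lambda>x. norm (\<alpha> *\<^sub>R u x - \<beta> *\<^sub>R v x))"
    and D: "fourth_power_integrable M (\<lambda>x. norm (u x - v x))"
    using fourth_power_integrable_norm_scaleR_diff[OF assms(1-4), of \<alpha> \<beta>]
      fourth_power_integrable_norm_scaleR_diff[OF assms(1-4), of 1 1] by simp_all
  have WU: "square_integrable M (\<lambda>x. norm (\<alpha> *\<^sub>R u x - \<beta> *\<^sub>R v x) * norm (u x))"
    and VD: "square_integrable M (\<lambda>x. \<beta> * (norm (v x) * norm (u x - v x)))"
    using W U V D by (simp_all add: fourth_power_integrable_imp_square_integrable_mult square_integrable_cmult)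
  have "L2_norm M (\<lambda>x. norm (\<alpha> *\<^sub>R tens (u x) (u x) - \<beta> *\<^sub>R tens (v x) (v x)))
      \<le> L2_norm M (\<lambda>x. norm (\<alpha> *\<^sub>R u x - \<beta> *\<^sub>R v x) * norm (u x) + \<beta> * (norm (v x) * norm (u x - v x)))"
    using square_integrable_add[OF WU VD] norm_tens_scaleR_diff_le[OF \<open>0 \<le> \<beta>\<close>]
    by (intro L2_norm_mono) (simp_all add: square_integrable_def)
  also have "\<dots> \<le> L2_norm M (\<lambda>x. norm (\<alpha> *\<^sub>R u x - \<beta> *\<^sub>R v x) * norm (u x))
      + \<beta> * L2_norm M (\<lambda>x. norm (v x) * norm (u x - v x))"
    using L2_norm_add[OF WU VD] \<open>0 \<le> \<beta>\<close> by (simp add: L2_norm_cmult)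
  also have "\<dots> \<le> L4_norm M (\<lambda>x. norm (\<alpha> *\<^sub>R u x - \<beta> *\<^sub>R v x)) * L4_norm M (\<lambda>x. norm (u x))
      + \<beta> * (L4_norm M (\<lambda>x. norm (v x)) * L4_norm M (\<lambda>x. norm (u x - v x)))"
    using L2_norm_mult_le_L4_norm[OF W U] L2_norm_mult_le_L4_norm[OF V D] \<open>0 \<le> \<beta>\<close>
    by (intro add_mono mult_left_mono)
  finally show ?thesis .
qed

lemma Lp_norm_truncated_tensor_diff_le:
  fixes u v :: "real^3 \<Rightarrow> real^3"
  assumes "0 < N" "in_Lp 4 \<Omega> u" "in_Lp 4 \<Omega> v"
  shows "Lp_norm 2 \<Omega> (\<lambda>x. FN N \<Omega> u *\<^sub>R tens (u x) (u x) - FN N \<Omega> v *\<^sub>R tens (v x) (v x))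
    \<le> 3 * N * Lp_norm 4 \<Omega> (\<lambda>x. u x - v x)"
proof -
  define M where "M = lebesgue_on \<Omega>"
  define a where "a = L4_norm M (\<lambda>x. norm (u x))"
  define b where "b = L4_norm M (\<lambda>x. norm (v x))"
  define d where "d = L4_norm M (\<lambda>x. norm (u x - v x))"
  have "0 \<le> a" "0 \<le> b"
    by (simp_all add: a_def b_def L4_norm_nonneg)
  then have "0 \<le> fN N a" "0 \<le> fN N b"
    using assms(1) by (simp_all add: fN_nonneg)
  have uv: "u \<in> borel_measurable M" "v \<in> borel_measurable M"
    and UV: "fourth_power_integrable M (\<lambda>x. norm (u x))" "fourth_power_integrable M (\<lambda>x. norm (v x))"
    using assms by (simp_all add: M_def in_Lp_def in_Lp_4_imp_fourth_power_integrable)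
  have "L2_norm M (\<lambda>x. norm (fN N a *\<^sub>R tens (u x) (u x) - fN N b *\<^sub>R tens (v x) (v x)))
      \<le> (fN N a * d + \<bar>fN N a - fN N b\<bar> * b) * a + fN N b * (b * d)"
    using L2_norm_tens_scaleR_diff_le[OF uv UV \<open>0 \<le> fN N b\<close>, where \<alpha> = "fN N a"]
      mult_right_mono[OF L4_norm_scaleR_diff_le[OF uv UV \<open>0 \<le> fN N a\<close>, where \<beta> = "fN N b"] \<open>0 \<le> a\<close>]
    unfolding a_def b_def d_def by linarith
  also have "\<dots> \<le> 3 * N * d"
    using assms(1) \<open>0 \<le> a\<close> \<open>0 \<le> b\<close> abs_L4_norm_diff_le[OF uv UV]
    unfolding a_def b_def d_def by (rule fN_tensor_estimate)
  finally show ?thesis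
    by (simp add: Lp_norm_2_eq_L2_norm Lp_norm_4_eq_L4_norm FN_def M_def a_def b_def d_def)
qed

lemma Lp_norm_truncated_tensor_le:
  fixes u :: "real^3 \<Rightarrow> real^3"
  assumes "0 < N" "in_Lp 4 \<Omega> u"
  shows "Lp_norm 2 \<Omega> (\<lambda>x. FN N \<Omega> u *\<^sub>R tens (u x) (u x)) \<le> N * Lp_norm 4 \<Omega> u"
proof -
  define M where "M = lebesgue_on \<Omega>"
  define a where "a = L4_norm M (\<lambda>x. norm (u x))"
  define \<alpha> where "\<alpha> = fN N a"
  have "0 \<le> a"
    by (simp add: a_def L4_norm_nonneg)
  then have "0 \<le> \<alpha>"
    using assms(1) by (simp add: \<alpha>_def fN_nonneg)
  have U: "fourth_power_integrable M (\<lambda>x. norm (u x))"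
    using assms by (simp add: M_def in_Lp_4_imp_fourth_power_integrable)
  have "L2_norm M (\<lambda>x. norm (\<alpha> *\<^sub>R tens (u x) (u x))) = \<alpha> * L2_norm M (\<lambda>x. norm (u x) * norm (u x))"
    using \<open>0 \<le> \<alpha>\<close> L2_norm_cmult[of M \<alpha> "\<lambda>x. norm (u x) * norm (u x)"] by (simp add: norm_tens)
  also have "\<dots> \<le> \<alpha> * (a * a)"
    using L2_norm_mult_le_L4_norm[OF U U] \<open>0 \<le> \<alpha>\<close> by (simp add: a_def mult_left_mono)
  also have "\<dots> \<le> N * a"
    using mult_right_mono[OF mult_fN_le[OF \<open>0 \<le> a\<close> assms(1)] \<open>0 \<le> a\<close>] by (simp add: \<alpha>_def algebra_simps)
  finally show ?thesis
    by (simp add: Lp_norm_2_eq_L2_norm Lp_norm_4_eq_L4_norm FN_def M_def a_def \<alpha>_def)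
qed

theorem lemma3p1:
  fixes \<Omega> :: "(real^3) set" and N :: real and u v :: "real^3 \<Rightarrow> real^3"
  assumes "open \<Omega>" "connected \<Omega>" "\<Omega> \<noteq> {}" "bounded \<Omega>"
    and "N > 0"
    and "in_Lp 4 \<Omega> u" "in_Lp 4 \<Omega> v"
  shows "(Lp_norm 2 \<Omega> (\<lambda>x. FN N \<Omega> u *\<^sub>R tens (u x) (u x) - FN N \<Omega> v *\<^sub>R tens (v x) (v x))
           \<le> 3 * N * Lp_norm 4 \<Omega> (\<lambda>x. u x - v x))
         \<and> Lp_norm 2 \<Omega> (\<lambda>x. FN N \<Omega> u *\<^sub>R tens (u x) (u x)) \<le> N * Lp_norm 4 \<Omega> u"
  using Lp_norm_truncated_tensor_diff_le[OF \<open>N > 0\<close> \<open>in_Lp 4 \<Omega> u\<close> \<open>in_Lp 4 \<Omega> v\<close>]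
    Lp_norm_truncated_tensor_le[OF \<open>N > 0\<close> \<open>in_Lp 4 \<Omega> u\<close>]
  by blast

end
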